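(* Let $T$ be a reduced linear trellis of length $n$. Any two elementary trellis factorizations of $T$ have the same span distribution. More precisely, for every span $\mathfrak{s}$, the number of factors with span $\mathfrak{s}$ in any elementary trellis factorization of $T$ equals $$\dim\mathbb{S}_{\mathfrak{s}}(T)-\dim\mathbb{S}_{<\mathfrak{s}}(T)=\dim\bigl(\mathbb{S}_{\mathfrak{s}}(T)/\mathbb{S}_{<\mathfrak{s}}(T)\bigr).$$
   Context: Let $\mathbb{F}$ be a finite field and $n\ge1$; indices are taken in $\mathbb{Z}_n$. A trellis $T$ of length $n$ over $\mathbb{F}$ consists of pairwise disjoint finite vertex sets $V_i(T)$, $i\in\mathbb{Z}_n$, and edge sets $E_i(T)\subseteq V_i(T)\times\mathbb{F}\times V_{i+1}(T)$; $(v,\alpha,w)\in E_i(T)$ is an edge from $v$ to $w$ with label $\alpha$. Trellises are trim. $T$ is linear if each $V_i(T)$ is an $\mathbb{F}$-vector space and each $E_i(T)$ a subspace. A cycle is a closed path of length $n$ starting in $V_0(T)$, identified with $(\mathbf{v},\boldsymbol{\alpha})\in\prod_iV_i(T)\times\mathbb{F}^n$; $\mathbb{S}(T)$ is the space of cycles. $T$ is reduced if every edge lies on a cycle. $T\sim T'$ means there are bijections $f_i:V_i(T)\to V_i(T')$ with $(v,\alpha,w)\in E_i(T)\iff(f_i(v),\alpha,f_{i+1}(w))\in E_i(T')$. Spans: for $a\in\mathbb{Z}_n$, $0\le l\le n-1$, $[a,a+l]=\{a,\dots,a+l\}\subseteq\mathbb{Z}_n$, $(a,a+l]=[a,a+l]\setminus\{a\}$;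 $(a,l)$ is a span; degenerate spans are $\emptyset$ (length $-1$) and $\mathbb{Z}_n$ (length $n$, written $(a,n)$). Partial order: $(a_1,l_1)\le(a_2,l_2)$ iff ($l_1\le l_2<n-1$ and $[a_1,a_1+l_1]\subseteq[a_2,a_2+l_2]$) or ($l_2=n-1$ and $(a_1,a_1+l_1]\subseteq(a_2,a_2+l_2]$) or $l_1=-1$ or $l_2=n$. A vector in $\mathbb{F}^n$ has span $(a,l)$, $0\le l\le n-1$, if its support lies in $[a,a+l]$; $\mathbb{Z}_n$ is a span of every vector. A nondegenerate $(a,l)$ is a span of a cycle $(\mathbf{v},\boldsymbol{\alpha})$ if $\{i:v_i\ne0\}\subseteq(a,a+l]$ and $\{i:\alpha_i\ne0\}\subseteq[a,a+l]$; $\emptyset$ is a span only of the zero cycle and $\mathbb{Z}_n$ of every cycle. $\mathbb{S}_{\mathfrak{s}}(T)$ is the subspace of cycles with span $\mathfrak{s}$; $\mathbb{S}_{<\mathfrak{s}}(T):=\sum_{\mathfrak{s}'\lneq\mathfrak{s}}\mathbb{S}_{\mathfrak{s}'}(T)$. Elementary trellises and products: for $\boldsymbol{\alpha}\in\mathbb{F}^n$ with span $(a,l)$, $0\le l\le n$, the elementary trellis $\boldsymbol{\alpha}|(a,l)$ has $V_i=\mathbb{F}$ for $i\in(a,a+l]$ (all $i$ if $l=n$), $V_i=0$ otherwise, and $E_i=\langle(u_i,\alpha_i,u_{i+1})\rangle$ with $u_i=1$ if $i\in(a,a+l]$, $u_i=0$ otherwise. The product $T\otimes T'$ has $V_i=V_i(T)\times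 V_i(T')$ and $E_i=\{((v,v'),\alpha+\alpha',(w,w')):(v,\alpha,w)\in E_i(T),(v',\alpha',w')\in E_i(T')\}$. An elementary trellis factorization of $T$ is an expression $T\sim\bigotimes_{i=1}^r\boldsymbol{\alpha}^i|(a_i,l_i)$, where by convention at most one factor has span $(a,0)$ for each $a\in\mathbb{Z}_n$; its span distribution is the multiset $\{\{(a_i,l_i):i=1,\dots,r\}\}$. *)

theory Defs
  imports Complex_Main "HOL-Library.Function_Algebras" "HOL-Library.Product_Plus" "HOL-Library.Multiset"
begin

text \<open>Indices in Z_n are represented by naturals i < n; successor is (i+1) mod n.\<close>

definition nxt :: "nat \<Rightarrow> nat \<Rightarrow> nat" where
  "nxt n i = (i + 1) mod n"

definition is_trellis :: "nat \<Rightarrow> (nat \<Rightarrow> 'v set) \<Rightarrow> (nat \<Rightarrow> ('v \<times> 'a \<times> 'v) set) \<Rightarrow> bool" where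
  "is_trellis n V E \<longleftrightarrow>
     (\<forall>i<n. finite (V i) \<and> E i \<subseteq> V i \<times> UNIV \<times> V (nxt n i))"

definition trim :: "nat \<Rightarrow> (nat \<Rightarrow> 'v set) \<Rightarrow> (nat \<Rightarrow> ('v \<times> 'a \<times> 'v) set) \<Rightarrow> bool" where
  "trim n V E \<longleftrightarrow>
     (\<forall>i<n. \<forall>x\<in>V i. (\<exists>a y. (x, a, y) \<in> E i)) \<and>
     (\<forall>i<n. \<forall>y\<in>V (nxt n i). (\<exists>x a. (x, a, y) \<in> E i))"

definition linear_trellis ::
  "('a::field \<Rightarrow> 'v::ab_group_add \<Rightarrow> 'v) \<Rightarrow> nat \<Rightarrow> (nat \<Rightarrow> 'v set) \<Rightarrow> (nat \<Rightarrow> ('v \<times> 'a \<times> 'v) set) \<Rightarrow> bool" where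
  "linear_trellis sc n V E \<longleftrightarrow>
     is_trellis n V E \<and>
     (\<forall>i<n. module.subspace sc (V i)) \<and>
     (\<forall>i<n. (0, 0, 0) \<in> E i \<and>
        (\<forall>x a y x' a' y'. (x, a, y) \<in> E i \<longrightarrow> (x', a', y') \<in> E i \<longrightarrow> (x + x', a + a', y + y') \<in> E i) \<and>
        (\<forall>c x a y. (x, a, y) \<in> E i \<longrightarrow> (sc c x, c * a, sc c y) \<in> E i))"

text \<open>Cycles: closed paths of length n starting in V 0, identified with pairs
  (v, alpha) of vertex and label sequences; values at indices >= n are fixed to 0.\<close>
definition cycles :: "nat \<Rightarrow> (nat \<Rightarrow> 'v::zero set) \<Rightarrow> (nat \<Rightarrow> ('v \<times> 'a::zero \<times> 'v) set)
    \<Rightarrow> ((nat \<Rightarrow> 'v) \<times> (nat \<Rightarrow> 'a)) set" where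
  "cycles n V E = {(v, al). (\<forall>i<n. (v i, al i, v (nxt n i)) \<in> E i) \<and>
                            (\<forall>i\<ge>n. v i = 0 \<and> al i = 0)}"

definition reduced :: "nat \<Rightarrow> (nat \<Rightarrow> 'v::zero set) \<Rightarrow> (nat \<Rightarrow> ('v \<times> 'a::zero \<times> 'v) set) \<Rightarrow> bool" where
  "reduced n V E \<longleftrightarrow>
     (\<forall>i<n. \<forall>e\<in>E i. \<exists>(v, al)\<in>cycles n V E. e = (v i, al i, v (nxt n i)))"

definition trellis_equiv :: "nat \<Rightarrow> (nat \<Rightarrow> 'v set) \<Rightarrow> (nat \<Rightarrow> ('v \<times> 'a \<times> 'v) set)
    \<Rightarrow> (nat \<Rightarrow> 'w set) \<Rightarrow> (nat \<Rightarrow> ('w \<times> 'a \<times> 'w) set) \<Rightarrow> bool" where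
  "trellis_equiv n V E V' E' \<longleftrightarrow>
     (\<exists>f. (\<forall>i<n. bij_betw (f i) (V i) (V' i)) \<and>
          (\<forall>i<n. \<forall>x\<in>V i. \<forall>y\<in>V (nxt n i). \<forall>a.
              (x, a, y) \<in> E i \<longleftrightarrow> (f i x, a, f (nxt n i) y) \<in> E' i))"

definition cint_closed :: "nat \<Rightarrow> nat \<Rightarrow> nat \<Rightarrow> nat set" where
  "cint_closed n a l = {(a + j) mod n | j. j \<le> l}"

definition cint_open :: "nat \<Rightarrow> nat \<Rightarrow> nat \<Rightarrow> nat set" where
  "cint_open n a l = {(a + j) mod n | j. 1 \<le> j \<and> j \<le> l}"

text \<open>Spans: the empty span, the full span Z_n (all (a,n) denote the same span),
  and nondegenerate spans (a,l) with a < n, l <= n - 1.\<close>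
datatype span = SEmpty | SFull | Sp nat nat

definition is_span :: "nat \<Rightarrow> span \<Rightarrow> bool" where
  "is_span n s = (case s of Sp a l \<Rightarrow> a < n \<and> l < n | _ \<Rightarrow> True)"

definition span_le :: "nat \<Rightarrow> span \<Rightarrow> span \<Rightarrow> bool" where
  "span_le n s1 s2 = (s1 = SEmpty \<or> s2 = SFull \<or>
     (case (s1, s2) of
        (Sp a1 l1, Sp a2 l2) \<Rightarrow>
           (l1 \<le> l2 \<and> l2 < n - 1 \<and> cint_closed n a1 l1 \<subseteq> cint_closed n a2 l2) \<or>
           (l2 = n - 1 \<and> cint_open n a1 l1 \<subseteq> cint_open n a2 l2)
      | _ \<Rightarrow> False))"

text \<open>Span of a vector alpha in F^n (only used for nondegenerate (a,l) and (a,n)).\<close>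
definition vec_has_span :: "nat \<Rightarrow> (nat \<Rightarrow> 'a::zero) \<Rightarrow> nat \<Rightarrow> nat \<Rightarrow> bool" where
  "vec_has_span n al a l \<longleftrightarrow> l = n \<or> (\<forall>i<n. al i \<noteq> 0 \<longrightarrow> i \<in> cint_closed n a l)"

definition cycle_has_span :: "nat \<Rightarrow> span \<Rightarrow> (nat \<Rightarrow> 'v::zero) \<times> (nat \<Rightarrow> 'a::zero) \<Rightarrow> bool" where
  "cycle_has_span n s c = (case s of
      SEmpty \<Rightarrow> c = (0, 0)
    | SFull \<Rightarrow> True
    | Sp a l \<Rightarrow> (\<forall>i<n. fst c i \<noteq> 0 \<longrightarrow> i \<in> cint_open n a l) \<and>
                (\<forall>i<n. snd c i \<noteq> 0 \<longrightarrow> i \<in> cint_closed n a l))"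

definition cyc_scale :: "('a::field \<Rightarrow> 'v \<Rightarrow> 'v) \<Rightarrow> 'a \<Rightarrow> (nat \<Rightarrow> 'v) \<times> (nat \<Rightarrow> 'a)
    \<Rightarrow> (nat \<Rightarrow> 'v) \<times> (nat \<Rightarrow> 'a)" where
  "cyc_scale sc c x = (\<lambda>i. sc c (fst x i), \<lambda>i. c * snd x i)"

text \<open>S_s(T) and S_{<s}(T) (the sum of subspaces = span of their union).\<close>
definition cycles_span :: "nat \<Rightarrow> (nat \<Rightarrow> 'v::zero set) \<Rightarrow> (nat \<Rightarrow> ('v \<times> 'a::zero \<times> 'v) set)
    \<Rightarrow> span \<Rightarrow> ((nat \<Rightarrow> 'v) \<times> (nat \<Rightarrow> 'a)) set" where
  "cycles_span n V E s = {c \<in> cycles n V E. cycle_has_span n s c}"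

definition cycles_below :: "('a::field \<Rightarrow> 'v::ab_group_add \<Rightarrow> 'v) \<Rightarrow> nat \<Rightarrow> (nat \<Rightarrow> 'v set)
    \<Rightarrow> (nat \<Rightarrow> ('v \<times> 'a \<times> 'v) set) \<Rightarrow> span \<Rightarrow> ((nat \<Rightarrow> 'v) \<times> (nat \<Rightarrow> 'a)) set" where
  "cycles_below sc n V E s =
     module.span (cyc_scale sc)
       (\<Union>{cycles_span n V E s' | s'. is_span n s' \<and> span_le n s' s \<and> s' \<noteq> s})"

definition cdim :: "('a::field \<Rightarrow> 'v::ab_group_add \<Rightarrow> 'v) \<Rightarrow> ((nat \<Rightarrow> 'v) \<times> (nat \<Rightarrow> 'a)) set \<Rightarrow> nat" where
  "cdim sc S = vector_space.dim (cyc_scale sc) S"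

text \<open>A factor is a triple (alpha, a, l) with a < n and 0 <= l <= n, standing for alpha|(a,l).\<close>
definition active :: "nat \<Rightarrow> nat \<Rightarrow> nat \<Rightarrow> nat \<Rightarrow> bool" where
  "active n a l i \<longleftrightarrow> l = n \<or> i \<in> cint_open n a l"

definition elemV :: "nat \<Rightarrow> nat \<Rightarrow> nat \<Rightarrow> nat \<Rightarrow> 'a::field set" where
  "elemV n a l i = (if active n a l i then UNIV else {0})"

definition elemE :: "nat \<Rightarrow> (nat \<Rightarrow> 'a::field) \<Rightarrow> nat \<Rightarrow> nat \<Rightarrow> nat \<Rightarrow> ('a \<times> 'a \<times> 'a) set" where
  "elemE n al a l i =
     (let u = (\<lambda>j. if active n a l j then 1 else 0)
      in {(c * u i, c * al i, c * u (nxt n i)) | c. True})"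

text \<open>The product of a list of trellises T_1 \<otimes> ... \<otimes> T_r (vertices are lists of length r;
  the empty product is the one-vertex trellis with a single zero-labelled edge).\<close>
definition prodV :: "(nat \<Rightarrow> 'v set) list \<Rightarrow> nat \<Rightarrow> 'v list set" where
  "prodV Vs i = {xs. length xs = length Vs \<and> (\<forall>k<length Vs. xs ! k \<in> (Vs ! k) i)}"

definition prodE :: "(nat \<Rightarrow> ('v \<times> 'a::comm_monoid_add \<times> 'v) set) list \<Rightarrow> nat
    \<Rightarrow> ('v list \<times> 'a \<times> 'v list) set" where
  "prodE Es i = {(xs, sum_list bs, ys) | xs bs ys.
       length xs = length Es \<and> length bs = length Es \<and> length ys = length Es \<and>
       (\<forall>k<length Es. (xs ! k, bs ! k, ys ! k) \<in> (Es ! k) i)}"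

definition factor_span :: "nat \<Rightarrow> (nat \<Rightarrow> 'a) \<times> nat \<times> nat \<Rightarrow> span" where
  "factor_span n f = (case f of (al, a, l) \<Rightarrow> if l = n then SFull else Sp a l)"

definition elem_factorization :: "nat \<Rightarrow> (nat \<Rightarrow> 'v set) \<Rightarrow> (nat \<Rightarrow> ('v \<times> 'a::field \<times> 'v) set)
    \<Rightarrow> ((nat \<Rightarrow> 'a) \<times> nat \<times> nat) list \<Rightarrow> bool" where
  "elem_factorization n V E fs \<longleftrightarrow>
     (\<forall>(al, a, l) \<in> set fs. a < n \<and> l \<le> n \<and> vec_has_span n al a l) \<and>
     (\<forall>(al, a, l) \<in> set fs. l = 0 \<longrightarrow> al a \<noteq> 0) \<and>
     (\<forall>j k. j < length fs \<longrightarrow> k < length fs \<longrightarrow> j \<noteq> k \<longrightarrow>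
        snd (snd (fs ! j)) = 0 \<longrightarrow> snd (snd (fs ! k)) = 0 \<longrightarrow>
        fst (snd (fs ! j)) \<noteq> fst (snd (fs ! k))) \<and>
     trellis_equiv n V E
        (prodV (map (\<lambda>(al, a, l). elemV n a l) fs))
        (prodE (map (\<lambda>(al, a, l). elemE n al a l) fs))"

definition count_span :: "nat \<Rightarrow> ((nat \<Rightarrow> 'a) \<times> nat \<times> nat) list \<Rightarrow> span \<Rightarrow> nat" where
  "count_span n fs s = length (filter (\<lambda>f. factor_span n f = s) fs)"

end

theory Submission
  imports Defs "HOL-Library.FuncSet"
begin

(* Fix a factorization T ~ alpha^1|(a_1,l_1) (x) ... (x) alpha^r|(a_r,l_r) of a linear trellis
   over the finite field F.  Every cycle of an elementary trellis is a multiple of its generating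
   cycle (u^k, alpha^k), so transporting the cycles sum_k z_k (u^k, alpha^k) of the product along
   the vertex bijections gives a bijection  Phi : F^r -> S(T).  Phi need not be linear, but
   Phi z - Phi z' has the same zero pattern as sum_k (z_k - z'_k)(u^k, alpha^k), and the latter has
   span s exactly when every factor k with z_k ~= z'_k has span <= s.  Hence S_s(T), and the span
   S_{<s}(T) of the S_s'(T) with s' < s, are images under Phi of translates of the coordinate
   subspaces of F^r belonging to the factors of span <= s, resp. < s.  Over a finite field a
   subspace of cardinality |F|^d has dimension d, so dim S_s(T) - dim S_{<s}(T) is the number of
   factors of span exactly s; this number therefore does not depend on the factorization. *)

section \<open>Cyclic intervals\<close>

text \<open>The forward distance from a to i in Z_n; positions of a cyclic interval starting at a are
  exactly the positions with small offset.\<close>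
definition cyc_off :: "nat \<Rightarrow> nat \<Rightarrow> nat \<Rightarrow> nat" where
  "cyc_off n a i = (i + n - a) mod n"

lemma cyc_off_lt: "1 \<le> n \<Longrightarrow> cyc_off n a i < n"
  unfolding cyc_off_def by simp

lemma cyc_off_add: assumes "a < n" shows "cyc_off n a ((a + j) mod n) = j mod n"
proof -
  have "cyc_off n a ((a + j) mod n) = ((a + j) mod n + (n - a)) mod n"
    unfolding cyc_off_def using assms by (simp add: add.commute)
  also have "\<dots> = (a + j + (n - a)) mod n" by (simp add: mod_add_left_eq)
  also have "a + j + (n - a) = j + n" using assms by simp
  finally show ?thesis by simp
qed

lemma add_cyc_off: assumes "a < n" "i < n" shows "(a + cyc_off n a i) mod n = i"
proof -
  have "(a + cyc_off n a i) mod n = (a + (i + n - a)) mod n"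
    unfolding cyc_off_def by (simp add: mod_add_right_eq)
  also have "a + (i + n - a) = i + n" using assms by simp
  finally show ?thesis using assms by simp
qed

lemma cyc_off_shift: assumes "a < n" "b < n"
  shows "cyc_off n a ((b + j) mod n) = (cyc_off n a b + j) mod n"
proof -
  have "(b + j) mod n = (a + (cyc_off n a b + j)) mod n"
    using add_cyc_off[OF assms] by (metis add.assoc mod_add_left_eq)
  thus ?thesis using cyc_off_add[OF assms(1)] by simp
qed

lemma cyc_off_self: "a < n \<Longrightarrow> cyc_off n a a = 0"
  unfolding cyc_off_def by simp

lemma cyc_off_eq_0: assumes "a < n" "i < n" "cyc_off n a i = 0" shows "i = a"
  using add_cyc_off[OF assms(1,2)] assms by simp

lemma mem_cint_closed: assumes "a < n" "l < n"
  shows "i \<in> cint_closed n a l \<longleftrightarrow> i < n \<and> cyc_off n a i \<le> l"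
proof
  assume "i \<in> cint_closed n a l"
  then obtain j where "j \<le> l" "i = (a + j) mod n" unfolding cint_closed_def by auto
  thus "i < n \<and> cyc_off n a i \<le> l" using cyc_off_add[OF assms(1), of j] assms by auto
next
  assume "i < n \<and> cyc_off n a i \<le> l"
  hence "i = (a + cyc_off n a i) mod n \<and> cyc_off n a i \<le> l" using add_cyc_off[OF assms(1)] by simp
  thus "i \<in> cint_closed n a l" unfolding cint_closed_def by blast
qed

lemma mem_cint_open: assumes "a < n" "l < n"
  shows "i \<in> cint_open n a l \<longleftrightarrow> i < n \<and> 1 \<le> cyc_off n a i \<and> cyc_off n a i \<le> l"
proof
  assume "i \<in> cint_open n a l"
  then obtain j where "1 \<le> j" "j \<le> l" "i = (a + j) mod n" unfolding cint_open_def by auto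
  thus "i < n \<and> 1 \<le> cyc_off n a i \<and> cyc_off n a i \<le> l" using cyc_off_add[OF assms(1), of j] assms by auto
next
  assume "i < n \<and> 1 \<le> cyc_off n a i \<and> cyc_off n a i \<le> l"
  hence "i = (a + cyc_off n a i) mod n \<and> 1 \<le> cyc_off n a i \<and> cyc_off n a i \<le> l"
    using add_cyc_off[OF assms(1)] by simp
  thus "i \<in> cint_open n a l" unfolding cint_open_def by blast
qed

lemma cint_closed_subset: "1 \<le> n \<Longrightarrow> cint_closed n a l \<subseteq> {..<n}"
  unfolding cint_closed_def by auto

lemma cint_open_subset: "1 \<le> n \<Longrightarrow> cint_open n a l \<subseteq> {..<n}"
  unfolding cint_open_def by auto

lemma self_notin_cint_open: "a < n \<Longrightarrow> l < n \<Longrightarrow> a \<notin> cint_open n a l"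
  using mem_cint_open cyc_off_self by fastforce

lemma cint_closed_full: "a < n \<Longrightarrow> i < n \<Longrightarrow> i \<in> cint_closed n a (n - 1)"
  using mem_cint_closed[of a n "n - 1" i] cyc_off_lt[of n a i] by auto

lemma cint_open_full: "b < n \<Longrightarrow> i < n \<Longrightarrow> i \<noteq> b \<Longrightarrow> i \<in> cint_open n b (n - 1)"
  using mem_cint_open[of b n "n - 1" i] cyc_off_lt[of n b i] cyc_off_eq_0[of b n i] by fastforce

lemma cint_closed_0: "b < n \<Longrightarrow> cint_closed n b 0 = {b}"
  unfolding cint_closed_def by auto

lemma cint_open_0: "cint_open n b 0 = {}"
  unfolding cint_open_def by auto

lemma succ_in_cint_open: "1 \<le> m \<Longrightarrow> (b + 1) mod n \<in> cint_open n b m"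
  unfolding cint_open_def by (auto intro!: exI[where x=1])

lemma cint_closed_cases:
  assumes "b < n" "i \<in> cint_closed n b m" shows "i = b \<or> i \<in> cint_open n b m"
proof -
  obtain j where j: "j \<le> m" "i = (b + j) mod n" using assms(2) unfolding cint_closed_def by auto
  show ?thesis
  proof (cases "j = 0")
    case True thus ?thesis using j assms(1) by simp
  next
    case False thus ?thesis using j unfolding cint_open_def by auto
  qed
qed

lemma nxt_shift: "nxt n ((b + j) mod n) = (b + Suc j) mod n"
  unfolding nxt_def by (simp add: mod_Suc_eq)

text \<open>An interval of length l < n - 1 does not wrap around the whole cycle: if the walk
  t, t+1, ..., t+m (mod n) starts inside [0, l] and every step lands inside [0, l] again,
  then no reduction mod n ever happened.\<close>
lemma walk_stays_below:
  fixes l n t m :: nat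
  assumes "l < n - 1" "t \<le> l" "\<forall>j. 1 \<le> j \<and> j \<le> m \<longrightarrow> (t + j) mod n \<le> l"
  shows "\<forall>j \<le> m. t + j \<le> l"
proof (intro allI impI)
  fix j assume "j \<le> m"
  thus "t + j \<le> l"
  proof (induction j)
    case 0 then show ?case using assms by simp
  next
    case (Suc j)
    hence "t + Suc j < n" using assms by simp
    moreover have "(t + Suc j) mod n \<le> l" using assms(3)[rule_format, of "Suc j"] Suc.prems by simp
    ultimately show ?case by simp
  qed
qed

lemma cint_open_subset_imp_closed:
  assumes "a < n" "b < n" "l < n - 1" "1 \<le> m" "m < n" "cint_open n b m \<subseteq> cint_open n a l"
  shows "cint_closed n b m \<subseteq> cint_closed n a l \<and> m \<le> l"
proof -
  let ?t = "cyc_off n a b"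
  have l: "l < n" using assms by simp
  have step: "1 \<le> (?t + j) mod n \<and> (?t + j) mod n \<le> l" if "1 \<le> j" "j \<le> m" for j
  proof -
    have "(b + j) mod n \<in> cint_open n a l" using that assms(6) unfolding cint_open_def by auto
    thus ?thesis using mem_cint_open[OF assms(1) l] cyc_off_shift[OF assms(1,2)] by simp
  qed
  have "?t < n" using cyc_off_lt assms by simp
  moreover have "(?t + 1) mod n \<noteq> 0" using step[of 1] assms by simp
  ultimately have "?t + 1 < n" by (metis add_lessD1 le_neq_implies_less less_iff_succ_less_eq mod_self)
  hence "?t \<le> l" using step[of 1] assms by simp
  hence below: "\<forall>j \<le> m. ?t + j \<le> l" using walk_stays_below[OF assms(3)] step by blast
  have "cint_closed n b m \<subseteq> cint_closed n a l"
  proof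
    fix i assume "i \<in> cint_closed n b m"
    then obtain j where "j \<le> m" "i = (b + j) mod n" unfolding cint_closed_def by auto
    moreover have "?t + j < n" using below \<open>j \<le> m\<close> l by (meson le_less_trans)
    ultimately show "i \<in> cint_closed n a l"
      using mem_cint_closed[OF assms(1) l] cyc_off_shift[OF assms(1,2)] below by auto
  qed
  thus ?thesis using below by auto
qed

lemma cint_closed_subset_imp_open:
  assumes "a < n" "b < n" "l < n - 1" "cint_closed n b m \<subseteq> cint_closed n a l"
  shows "cint_open n b m \<subseteq> cint_open n a l"
proof -
  let ?t = "cyc_off n a b"
  have l: "l < n" using assms by simp
  have step: "(?t + j) mod n \<le> l" if "j \<le> m" for j
  proof -
    have "(b + j) mod n \<in> cint_closed n a l" using that assms(4) unfolding cint_closed_def by auto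
    thus ?thesis using mem_cint_closed[OF assms(1) l] cyc_off_shift[OF assms(1,2)] by simp
  qed
  have "?t \<le> l" using step[of 0] cyc_off_lt[of n a b] assms by simp
  hence below: "\<forall>j \<le> m. ?t + j \<le> l" using walk_stays_below[OF assms(3)] step by blast
  show ?thesis
  proof
    fix i assume "i \<in> cint_open n b m"
    then obtain j where "1 \<le> j" "j \<le> m" "i = (b + j) mod n" unfolding cint_open_def by auto
    moreover have "?t + j < n" using below \<open>j \<le> m\<close> l by (meson le_less_trans)
    ultimately show "i \<in> cint_open n a l"
      using mem_cint_open[OF assms(1) l] cyc_off_shift[OF assms(1,2)] below by auto
  qed
qed

lemma cint_closed_subset_same_length:
  assumes "a < n" "b < n" "l < n - 1" "cint_closed n b l \<subseteq> cint_closed n a l"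
  shows "a = b"
proof -
  let ?t = "cyc_off n a b"
  have l: "l < n" using assms by simp
  have step: "(?t + j) mod n \<le> l" if "j \<le> l" for j
  proof -
    have "(b + j) mod n \<in> cint_closed n a l" using that assms(4) unfolding cint_closed_def by auto
    thus ?thesis using mem_cint_closed[OF assms(1) l] cyc_off_shift[OF assms(1,2)] by simp
  qed
  have "?t \<le> l" using step[of 0] cyc_off_lt[of n a b] assms by simp
  hence "\<forall>j \<le> l. ?t + j \<le> l" using walk_stays_below[OF assms(3)] step by blast
  hence "?t = 0" by auto
  thus ?thesis using cyc_off_eq_0[OF assms(1,2)] by simp
qed

section \<open>The partial order on spans\<close>

lemma span_le_sets:
  assumes "span_le n (Sp b m) (Sp a l)" "a < n" "b < n" "l < n" "m < n"
  shows "cint_open n b m \<subseteq> cint_open n a l \<and> cint_closed n b m \<subseteq> cint_closed n a l"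
proof -
  from assms(1) have "(m \<le> l \<and> l < n - 1 \<and> cint_closed n b m \<subseteq> cint_closed n a l) \<or>
     (l = n - 1 \<and> cint_open n b m \<subseteq> cint_open n a l)" unfolding span_le_def by simp
  thus ?thesis
  proof
    assume "m \<le> l \<and> l < n - 1 \<and> cint_closed n b m \<subseteq> cint_closed n a l"
    thus ?thesis using cint_closed_subset_imp_open[OF assms(2,3)] by blast
  next
    assume h: "l = n - 1 \<and> cint_open n b m \<subseteq> cint_open n a l"
    have "1 \<le> n" using assms(2) by simp
    hence "cint_closed n b m \<subseteq> cint_closed n a l"
      using h cint_closed_full[OF assms(2)] cint_closed_subset[of n b m] by blast
    thus ?thesis using h by blast
  qed
qed

lemma span_le_refl: "is_span n s \<Longrightarrow> span_le n s s"
  unfolding is_span_def span_le_def by (cases s) (auto simp: less_Suc_eq_le)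

lemma span_le_antisym:
  assumes "is_span n s" "is_span n s'" "span_le n s s'" "span_le n s' s"
  shows "s = s'"
proof (cases s)
  case SEmpty thus ?thesis using assms(4) unfolding span_le_def by (cases s') auto
next
  case SFull thus ?thesis using assms(3) unfolding span_le_def by (cases s') auto
next
  case (Sp b m)
  show ?thesis
  proof (cases s')
    case SEmpty thus ?thesis using assms(3) Sp unfolding span_le_def by auto
  next
    case SFull thus ?thesis using assms(4) Sp unfolding span_le_def by auto
  next
    case (Sp a l)
    note s = \<open>s = Sp b m\<close> and s' = Sp
    have bounds: "b < n" "m < n" "a < n" "l < n" using assms(1,2) s s' unfolding is_span_def by auto
    have le1: "(m \<le> l \<and> l < n - 1 \<and> cint_closed n b m \<subseteq> cint_closed n a l) \<or>
        (l = n - 1 \<and> cint_open n b m \<subseteq> cint_open n a l)"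
      using assms(3) s s' unfolding span_le_def by simp
    have le2: "(l \<le> m \<and> m < n - 1 \<and> cint_closed n a l \<subseteq> cint_closed n b m) \<or>
        (m = n - 1 \<and> cint_open n a l \<subseteq> cint_open n b m)"
      using assms(4) s s' unfolding span_le_def by simp
    show ?thesis
    proof (cases "l = n - 1")
      case True
      with le1 le2 have m: "m = n - 1" by auto
      have "a = b"
      proof (rule ccontr)
        assume "a \<noteq> b"
        hence "a \<in> cint_open n b m" using cint_open_full[of b n a] bounds m by auto
        hence "a \<in> cint_open n a l" using le1 le2 True m by auto
        thus False using self_notin_cint_open bounds by blast
      qed
      thus ?thesis using s s' True m by simp
    next
      case False
      with le1 le2 have "l = m" "cint_closed n b m \<subseteq> cint_closed n a l" "l < n - 1" by auto
      hence "a = b" using cint_closed_subset_same_length[of a n b l] bounds by auto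
      thus ?thesis using s s' \<open>l = m\<close> by simp
    qed
  qed
qed

text \<open>Transitivity: if the middle span is short, both comparisons are inclusions of closed
  intervals with growing lengths; if the largest span has length n - 1, both yield inclusions
  of the open intervals.\<close>
lemma span_le_trans:
  assumes "is_span n s1" "is_span n s2" "is_span n s3" "span_le n s1 s2" "span_le n s2 s3"
  shows "span_le n s1 s3"
proof (cases "s1 = SEmpty \<or> s3 = SFull")
  case True thus ?thesis unfolding span_le_def by auto
next
  case False
  have not_le_empty: "span_le n s SEmpty \<Longrightarrow> s = SEmpty" for s
    unfolding span_le_def by (cases s) auto
  have full_le: "span_le n SFull s \<Longrightarrow> s = SFull" for s
    unfolding span_le_def by (cases s) auto
  have "s2 \<noteq> SEmpty" "s3 \<noteq> SEmpty" using False assms(4,5) not_le_empty by metis+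
  moreover have "s1 \<noteq> SFull" "s2 \<noteq> SFull" using False assms(4,5) full_le by metis+
  ultimately obtain a l c p b m where s3: "s3 = Sp a l" and s2: "s2 = Sp c p" and s1: "s1 = Sp b m"
    using False by (cases s1; cases s2; cases s3) auto
  have bounds: "a < n" "l < n" "b < n" "m < n" "c < n" "p < n"
    using assms(1-3) s1 s2 s3 unfolding is_span_def by auto
  have sets12: "cint_open n b m \<subseteq> cint_open n c p \<and> cint_closed n b m \<subseteq> cint_closed n c p"
    using span_le_sets[of n b m c p] assms(4) s1 s2 bounds by simp
  have sets23: "cint_open n c p \<subseteq> cint_open n a l \<and> cint_closed n c p \<subseteq> cint_closed n a l"
    using span_le_sets[of n c p a l] assms(5) s2 s3 bounds by simp
  show ?thesis
  proof (cases "l = n - 1")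
    case True thus ?thesis using sets12 sets23 s1 s3 unfolding span_le_def by auto
  next
    case False
    hence "p \<le> l" "p < n - 1" using assms(5) s2 s3 unfolding span_le_def by auto
    hence "m \<le> p" using assms(4) s1 s2 unfolding span_le_def by auto
    thus ?thesis using \<open>p \<le> l\<close> False bounds sets12 sets23 s1 s3 unfolding span_le_def by auto
  qed
qed

lemma exists_below_iff:
  assumes "is_span n t" "is_span n s"
  shows "(\<exists>s'. is_span n s' \<and> span_le n s' s \<and> s' \<noteq> s \<and> span_le n t s')
     \<longleftrightarrow> span_le n t s \<and> t \<noteq> s"
proof
  assume "\<exists>s'. is_span n s' \<and> span_le n s' s \<and> s' \<noteq> s \<and> span_le n t s'"
  then obtain s' where s': "is_span n s'" "span_le n s' s" "s' \<noteq> s" "span_le n t s'" by blast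
  have "span_le n t s" using span_le_trans[OF assms(1) s'(1) assms(2) s'(4,2)] .
  moreover have "t \<noteq> s" using span_le_antisym[OF s'(1) assms(2) s'(2)] s'(3,4) by blast
  ultimately show "span_le n t s \<and> t \<noteq> s" by simp
next
  assume "span_le n t s \<and> t \<noteq> s"
  thus "\<exists>s'. is_span n s' \<and> span_le n s' s \<and> s' \<noteq> s \<and> span_le n t s'"
    using assms(1) span_le_refl by blast
qed

section \<open>Counting in finite vector spaces\<close>

context vector_space begin

text \<open>Over a finite field F, a subspace with a basis of size d has exactly |F|^d elements; hence
  the dimension of a finite subspace can be read off from its cardinality.\<close>
lemma card_span_independent:
  assumes "finite (UNIV :: 'a set)" "finite B" "independent B"
  shows "card (span B) = card (UNIV :: 'a set) ^ card B"
  using assms(2,3)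
proof (induction B rule: finite_induct)
  case empty thus ?case by simp
next
  case (insert b B)
  have indep: "independent B" and b_new: "b \<notin> span B"
    using insert.prems insert.hyps independent_insert[of b B] by auto
  let ?h = "\<lambda>(c, y). c *s b + y"
  \<comment> \<open>span (insert b B) is in bijection with F \<times> span B via (c, y) \<mapsto> c b + y\<close>
  have img: "?h ` (UNIV \<times> span B) = span (insert b B)"
  proof
    show "?h ` (UNIV \<times> span B) \<subseteq> span (insert b B)"
    proof clarify
      fix c y assume "y \<in> span B"
      hence "c *s b + y - c *s b \<in> span B" by simp
      thus "c *s b + y \<in> span (insert b B)" using span_breakdown_eq by blast
    qed
    show "span (insert b B) \<subseteq> ?h ` (UNIV \<times> span B)"
    proof
      fix x assume "x \<in> span (insert b B)"
      then obtain k where k: "x - k *s b \<in> span B" using span_breakdown_eq by blast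
      have "x = ?h (k, x - k *s b)" by simp
      thus "x \<in> ?h ` (UNIV \<times> span B)" using k by blast
    qed
  qed
  have inj: "inj_on ?h (UNIV \<times> span B)"
  proof (rule inj_onI, clarsimp)
    fix c y c' y' assume y: "y \<in> span B" "y' \<in> span B" and eq: "c *s b + y = c' *s b + y'"
    have "(c - c') *s b = y' - y" using eq by (simp add: algebra_simps)
    hence diff: "(c - c') *s b \<in> span B" using span_diff[OF y(2) y(1)] by simp
    show "c = c' \<and> y = y'"
    proof (cases "c = c'")
      case True thus ?thesis using eq by simp
    next
      case False
      hence "b \<in> span B" using span_scale[OF diff, of "inverse (c - c')"] by simp
      thus ?thesis using b_new by simp
    qed
  qed
  have "card (span (insert b B)) = card (UNIV :: 'a set) * card (span B)"
    using card_image[OF inj] img by (simp add: card_cartesian_product)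
  thus ?case using insert.IH indep insert.hyps by simp
qed

lemma card_subspace:
  assumes "finite (UNIV :: 'a set)" "subspace W" "finite W"
  shows "card W = card (UNIV :: 'a set) ^ dim W"
proof -
  obtain B where B: "B \<subseteq> W" "independent B" "W \<subseteq> span B" "card B = dim W"
    using basis_exists by blast
  have "span B = W" using span_subspace B assms by blast
  moreover have "finite B" using B assms finite_subset by blast
  ultimately show ?thesis using card_span_independent[OF assms(1) _ B(2)] B by simp
qed

lemma dim_eq_if_card:
  assumes "finite (UNIV :: 'a set)" "subspace W" "finite W" "card W = card (UNIV :: 'a set) ^ d"
  shows "dim W = d"
proof -
  have "card {0::'a, 1} \<le> card (UNIV :: 'a set)" using card_mono[OF assms(1)] by blast
  hence "1 < card (UNIV :: 'a set)" by simp
  moreover have "card (UNIV :: 'a set) ^ dim W = card (UNIV :: 'a set) ^ d"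
    using card_subspace assms by simp
  ultimately show ?thesis using power_inject_exp by blast
qed

end

definition coord_space :: "nat set \<Rightarrow> (nat \<Rightarrow> 'a::zero) set" where
  "coord_space K = {z. \<forall>k. z k \<noteq> 0 \<longrightarrow> k \<in> K}"

lemma coord_space_restrict_bij:
  "bij_betw (\<lambda>z. restrict z K) (coord_space K :: (nat \<Rightarrow> 'a::zero) set) (K \<rightarrow>\<^sub>E UNIV)"
proof (rule bij_betwI')
  fix x y :: "nat \<Rightarrow> 'a" assume "x \<in> coord_space K" "y \<in> coord_space K"
  hence zero: "k \<notin> K \<Longrightarrow> x k = 0 \<and> y k = 0" for k unfolding coord_space_def by blast
  show "(restrict x K = restrict y K) = (x = y)"
  proof
    assume eq: "restrict x K = restrict y K"
    show "x = y"
    proof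
      fix k show "x k = y k"
        using fun_cong[OF eq, of k] zero[of k] by (cases "k \<in> K") auto
    qed
  qed simp
next
  fix e :: "nat \<Rightarrow> 'a" assume e: "e \<in> K \<rightarrow>\<^sub>E UNIV"
  have "(\<lambda>k. if k \<in> K then e k else 0) \<in> coord_space K" unfolding coord_space_def by auto
  moreover have "e = restrict (\<lambda>k. if k \<in> K then e k else 0) K"
    using e by (auto simp: restrict_def fun_eq_iff PiE_def extensional_def)
  ultimately show "\<exists>x\<in>coord_space K. e = restrict x K" by blast
qed simp

lemma card_coord_space:
  assumes "finite K"
  shows "card (coord_space K :: (nat \<Rightarrow> 'a::zero) set) = card (UNIV :: 'a set) ^ card K"
proof -
  have "card (coord_space K :: (nat \<Rightarrow> 'a) set) = card (K \<rightarrow>\<^sub>E (UNIV :: 'a set))"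
    using bij_betw_same_card[OF coord_space_restrict_bij] by blast
  thus ?thesis using assms by (simp add: card_PiE)
qed

lemma finite_coord_space:
  assumes "finite K" "finite (UNIV :: 'a set)"
  shows "finite (coord_space K :: (nat \<Rightarrow> 'a::zero) set)"
proof -
  have "finite (K \<rightarrow>\<^sub>E (UNIV :: 'a set))" using assms by (simp add: finite_PiE)
  thus ?thesis using bij_betw_finite[OF coord_space_restrict_bij] by blast
qed

lemma coord_space_add:
  fixes x y :: "nat \<Rightarrow> 'a::monoid_add"
  shows "x \<in> coord_space K \<Longrightarrow> y \<in> coord_space K \<Longrightarrow> x + y \<in> coord_space K"
proof -
  have "(x + y) k \<noteq> 0 \<Longrightarrow> x k \<noteq> 0 \<or> y k \<noteq> 0" for k by auto
  thus "x \<in> coord_space K \<Longrightarrow> y \<in> coord_space K \<Longrightarrow> x + y \<in> coord_space K"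
    unfolding coord_space_def by blast
qed

lemma coord_space_diff:
  fixes x y :: "nat \<Rightarrow> 'a::group_add"
  shows "x \<in> coord_space K \<Longrightarrow> y \<in> coord_space K \<Longrightarrow> x - y \<in> coord_space K"
proof -
  have "(x - y) k \<noteq> 0 \<Longrightarrow> x k \<noteq> 0 \<or> y k \<noteq> 0" for k by auto
  thus "x \<in> coord_space K \<Longrightarrow> y \<in> coord_space K \<Longrightarrow> x - y \<in> coord_space K"
    unfolding coord_space_def by blast
qed

lemma coord_space_mono: "x \<in> coord_space K \<Longrightarrow> K \<subseteq> L \<Longrightarrow> x \<in> coord_space L"
  unfolding coord_space_def by blast

lemma cycle_space_vector_space:
  assumes "vector_space sc" shows "vector_space (cyc_scale sc)"
proof -
  interpret vector_space sc by fact
  show ?thesis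
    by unfold_locales (auto simp: cyc_scale_def scale_right_distrib scale_left_distrib
        algebra_simps prod_eq_iff fun_eq_iff)
qed

lemma cycles_subspace:
  assumes "vector_space sc" "linear_trellis sc n V E"
  shows "module.subspace (cyc_scale sc) (cycles n V E)"
proof -
  interpret C: vector_space "cyc_scale sc" using cycle_space_vector_space[OF assms(1)] .
  have zero: "i < n \<Longrightarrow> (0, 0, 0) \<in> E i"
    and add: "i < n \<Longrightarrow> (x, a, y) \<in> E i \<Longrightarrow> (x', a', y') \<in> E i \<Longrightarrow> (x + x', a + a', y + y') \<in> E i"
    and scale: "i < n \<Longrightarrow> (x, a, y) \<in> E i \<Longrightarrow> (sc c x, c * a, sc c y) \<in> E i"
    for i x a y x' a' y' c using assms(2) unfolding linear_trellis_def by blast+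
  interpret vector_space sc by fact
  show ?thesis
  proof (rule C.subspaceI)
    show "0 \<in> cycles n V E" using zero by (simp add: cycles_def zero_prod_def)
  next
    fix x y assume "x \<in> cycles n V E" "y \<in> cycles n V E"
    thus "x + y \<in> cycles n V E"
      using add by (cases x, cases y) (auto simp: cycles_def)
  next
    fix c x assume "x \<in> cycles n V E"
    thus "cyc_scale sc c x \<in> cycles n V E"
      using scale by (cases x) (auto simp: cycles_def cyc_scale_def)
  qed
qed

lemma pair_eq_zero_iff: "c = (0, 0) \<longleftrightarrow> (\<forall>i. fst c i = 0 \<and> snd c i = 0)"
  by (auto simp: prod_eq_iff fun_eq_iff)

lemma cycle_has_span_cong:
  assumes "\<And>i. (fst c i = 0 \<longleftrightarrow> fst d i = 0) \<and> (snd c i = 0 \<longleftrightarrow> snd d i = 0)"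
  shows "cycle_has_span n s c \<longleftrightarrow> cycle_has_span n s d"
  using assms unfolding cycle_has_span_def pair_eq_zero_iff[of c] pair_eq_zero_iff[of d]
  by (cases s) auto

lemma cycles_span_subspace:
  assumes "vector_space sc" "linear_trellis sc n V E"
  shows "module.subspace (cyc_scale sc) (cycles_span n V E s)"
proof -
  interpret S: vector_space sc by fact
  interpret C: vector_space "cyc_scale sc" using cycle_space_vector_space[OF assms(1)] .
  note cyc = cycles_subspace[OF assms]
  show ?thesis
  proof (rule C.subspaceI)
    show "0 \<in> cycles_span n V E s"
      using C.subspace_0[OF cyc] by (cases s) (auto simp: cycles_span_def cycle_has_span_def zero_prod_def)
  next
    fix x y assume xy: "x \<in> cycles_span n V E s" "y \<in> cycles_span n V E s"
    have "fst (x + y) i \<noteq> 0 \<Longrightarrow> fst x i \<noteq> 0 \<or> fst y i \<noteq> 0"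
      "snd (x + y) i \<noteq> 0 \<Longrightarrow> snd x i \<noteq> 0 \<or> snd y i \<noteq> 0" for i by auto
    hence "cycle_has_span n s (x + y)"
      using xy by (cases s) (auto simp: cycles_span_def cycle_has_span_def zero_prod_def)
    thus "x + y \<in> cycles_span n V E s"
      using xy C.subspace_add[OF cyc] unfolding cycles_span_def by blast
  next
    fix c x assume x: "x \<in> cycles_span n V E s"
    have "fst (cyc_scale sc c x) i \<noteq> 0 \<Longrightarrow> fst x i \<noteq> 0"
      "snd (cyc_scale sc c x) i \<noteq> 0 \<Longrightarrow> snd x i \<noteq> 0" for i by (auto simp: cyc_scale_def)
    hence "cycle_has_span n s (cyc_scale sc c x)"
      using x by (cases s) (auto simp: cycles_span_def cycle_has_span_def cyc_scale_def zero_prod_def fun_eq_iff)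
    thus "cyc_scale sc c x \<in> cycles_span n V E s"
      using x C.subspace_scale[OF cyc] unfolding cycles_span_def by blast
  qed
qed

section \<open>Linear combinations of elementary cycles\<close>

lemma sum_eq_single:
  assumes "finite A" "k \<in> A" "\<And>j. j \<in> A \<Longrightarrow> j \<noteq> k \<Longrightarrow> g j = 0"
  shows "sum g A = g k"
  using sum.remove[OF assms(1,2), of g] sum.neutral[of "A - {k}" g] assms(3) by simp

text \<open>Factor k has the generating cycle (u^k, alpha^k), where
  u^k is the indicator of the positions at which the factor is active.\<close>
locale factor_list =
  fixes n :: nat and fs :: "((nat \<Rightarrow> 'a::field) \<times> nat \<times> nat) list"
  assumes n_pos: "1 \<le> n"
    and factors_wf: "\<forall>(al, a, l) \<in> set fs. a < n \<and> l \<le> n \<and> vec_has_span n al a l"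
    and point_factors_nz: "\<forall>(al, a, l) \<in> set fs. l = 0 \<longrightarrow> al a \<noteq> 0"
    and point_factors_distinct: "\<forall>j k. j < length fs \<longrightarrow> k < length fs \<longrightarrow> j \<noteq> k \<longrightarrow>
        snd (snd (fs ! j)) = 0 \<longrightarrow> snd (snd (fs ! k)) = 0 \<longrightarrow>
        fst (snd (fs ! j)) \<noteq> fst (snd (fs ! k))"
begin

abbreviation "r \<equiv> length fs"

definition flab :: "nat \<Rightarrow> nat \<Rightarrow> 'a" where "flab k = fst (fs ! k)"
definition fstart :: "nat \<Rightarrow> nat" where "fstart k = fst (snd (fs ! k))"
definition flen :: "nat \<Rightarrow> nat" where "flen k = snd (snd (fs ! k))"
definition factive :: "nat \<Rightarrow> nat \<Rightarrow> bool" where "factive k i = active n (fstart k) (flen k) i"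
definition fspan :: "nat \<Rightarrow> span" where "fspan k = factor_span n (fs ! k)"
definition gen_vertex :: "nat \<Rightarrow> nat \<Rightarrow> 'a" where "gen_vertex k i = (if factive k i then 1 else 0)"

lemma nth_factor: "fs ! k = (flab k, fstart k, flen k)"
  unfolding flab_def fstart_def flen_def by simp

lemma fstart_lt: "k < r \<Longrightarrow> fstart k < n"
  using factors_wf nth_mem[of k fs] nth_factor[of k] by fastforce

lemma flen_le: "k < r \<Longrightarrow> flen k \<le> n"
  using factors_wf nth_mem[of k fs] nth_factor[of k] by fastforce

lemma flab_support:
  "k < r \<Longrightarrow> flen k < n \<Longrightarrow> i < n \<Longrightarrow> flab k i \<noteq> 0 \<Longrightarrow> i \<in> cint_closed n (fstart k) (flen k)"
  using factors_wf nth_mem[of k fs] nth_factor[of k] unfolding vec_has_span_def by fastforce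

lemma flab_point_nz: "k < r \<Longrightarrow> flen k = 0 \<Longrightarrow> flab k (fstart k) \<noteq> 0"
  using point_factors_nz nth_mem[of k fs] nth_factor[of k] by fastforce

lemma point_factors_eq:
  "j < r \<Longrightarrow> k < r \<Longrightarrow> flen j = 0 \<Longrightarrow> flen k = 0 \<Longrightarrow> fstart j = fstart k \<Longrightarrow> j = k"
  using point_factors_distinct unfolding flen_def fstart_def by blast

lemma fspan_eq: "fspan k = (if flen k = n then SFull else Sp (fstart k) (flen k))"
  unfolding fspan_def factor_span_def using nth_factor[of k] by simp

lemma factive_full: "flen k = n \<Longrightarrow> factive k i"
  unfolding factive_def active_def by simp

lemma factive_iff: "flen k \<noteq> n \<Longrightarrow> factive k i \<longleftrightarrow> i \<in> cint_open n (fstart k) (flen k)"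
  unfolding factive_def active_def by simp

lemma factive_succ_start: "1 \<le> flen k \<Longrightarrow> factive k ((fstart k + 1) mod n)"
  using factive_full factive_iff succ_in_cint_open by blast

lemma fspan_is_span: "k < r \<Longrightarrow> is_span n (fspan k)"
  using fstart_lt flen_le unfolding fspan_eq is_span_def by (auto simp: le_less)

text \<open>Point factors (length 0) sit at distinct positions, so any other factor labelling the
  position of a point factor has positive length and covers that position.\<close>
lemma point_factor_alone:
  assumes "k < r" "flen k = 0" "k' < r" "k' \<noteq> k" "flen k' < n" "flab k' (fstart k) \<noteq> 0"
  shows "1 \<le> flen k' \<and> fstart k \<in> cint_closed n (fstart k') (flen k')"
proof -
  have inb: "fstart k \<in> cint_closed n (fstart k') (flen k')"
    using flab_support[OF assms(3,5) fstart_lt[OF assms(1)] assms(6)] .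
  have "flen k' \<noteq> 0"
  proof
    assume "flen k' = 0"
    hence "fstart k = fstart k'" using inb cint_closed_0[OF fstart_lt[OF assms(3)]] by simp
    thus False using point_factors_eq[of k k'] assms \<open>flen k' = 0\<close> by auto
  qed
  thus ?thesis using inb by simp
qed

text \<open>The combination sum_k z_k (u^k, alpha^k) of the generating cycles; the vertex at
  position i is recorded by its vector of coordinates in the product.\<close>
definition comb :: "(nat \<Rightarrow> 'a) \<Rightarrow> (nat \<Rightarrow> nat \<Rightarrow> 'a) \<times> (nat \<Rightarrow> 'a)" where
  "comb z = ((\<lambda>i. if i < n then (\<lambda>k. if k < r then z k * gen_vertex k i else 0) else 0),
             (\<lambda>i. if i < n then (\<Sum>k<r. z k * flab k i) else 0))"

lemma comb_vertex_eq_0: "i < n \<Longrightarrow> fst (comb z) i = 0 \<longleftrightarrow> (\<forall>k<r. factive k i \<longrightarrow> z k = 0)"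
  unfolding comb_def gen_vertex_def by (auto simp: fun_eq_iff)

lemma comb_label: "i < n \<Longrightarrow> snd (comb z) i = (\<Sum>k<r. z k * flab k i)"
  unfolding comb_def by simp

lemma comb_label_diff: "snd (comb x) - snd (comb y) = snd (comb (x - y))"
  unfolding comb_def by (auto simp: fun_eq_iff sum_subtractf[symmetric] left_diff_distrib)

lemma comb_span_Sp:
  "cycle_has_span n (Sp a l) (comb z) \<longleftrightarrow>
     (\<forall>i<n. i \<notin> cint_open n a l \<longrightarrow> (\<forall>k<r. factive k i \<longrightarrow> z k = 0)) \<and>
     (\<forall>i<n. i \<notin> cint_closed n a l \<longrightarrow> (\<Sum>k<r. z k * flab k i) = 0)"
  unfolding cycle_has_span_def using comb_vertex_eq_0 comb_label by auto

lemma comb_eq_0_imp: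
  assumes "cycle_has_span n SEmpty (comb z)" "k < r" shows "z k = 0"
proof -
  have c0: "fst (comb z) i = 0" "snd (comb z) i = 0" for i
    using assms(1) unfolding cycle_has_span_def by simp_all
  have long: "z j = 0" if "j < r" "1 \<le> flen j" for j
    using c0(1)[of "(fstart j + 1) mod n"] comb_vertex_eq_0 factive_succ_start[OF that(2)] that(1) n_pos
    by simp
  show ?thesis
  proof (cases "flen k = 0")
    case False thus ?thesis using long assms(2) by simp
  next
    case True
    have "(\<Sum>j<r. z j * flab j (fstart k)) = z k * flab k (fstart k)"
    proof (rule sum_eq_single)
      fix j assume j: "j \<in> {..<r}" "j \<noteq> k"
      show "z j * flab j (fstart k) = 0"
      proof (cases "1 \<le> flen j")
        case True thus ?thesis using long j by simp
      next
        case False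
        hence "flen j < n" using n_pos by simp
        thus ?thesis using point_factor_alone[OF assms(2) \<open>flen k = 0\<close> _ j(2)] j False by auto
      qed
    qed (use assms(2) in auto)
    moreover have "(\<Sum>j<r. z j * flab j (fstart k)) = 0"
      using c0(2)[of "fstart k"] comb_label[OF fstart_lt[OF assms(2)]] by simp
    ultimately show ?thesis using flab_point_nz[OF assms(2) True] by simp
  qed
qed


text \<open>If the combination has span (a, a+l], every factor of positive length with nonzero
  coefficient is active only inside (a, a+l], hence its span lies below (a, l).\<close>
lemma comb_span_long_factor:
  assumes "a < n" "l < n" "cycle_has_span n (Sp a l) (comb z)" "k < r" "z k \<noteq> 0" "1 \<le> flen k"
  shows "flen k < n \<and> span_le n (Sp (fstart k) (flen k)) (Sp a l) \<and>
         cint_closed n (fstart k) (flen k) \<subseteq> cint_closed n a l"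
proof -
  have vert: "\<And>i. i < n \<Longrightarrow> i \<notin> cint_open n a l \<Longrightarrow> factive k i \<Longrightarrow> False"
    using assms(3,4,5) unfolding comb_span_Sp by blast
  have not_full: "flen k \<noteq> n" using vert[of a] factive_full self_notin_cint_open assms(1,2) by blast
  hence len: "flen k < n" using flen_le[OF assms(4)] by simp
  have opn: "cint_open n (fstart k) (flen k) \<subseteq> cint_open n a l"
    using vert factive_iff[OF not_full] cint_open_subset[OF n_pos] by blast
  show ?thesis
  proof (cases "l = n - 1")
    case True
    have "cint_closed n (fstart k) (flen k) \<subseteq> cint_closed n a l"
      using True cint_closed_full[OF assms(1)] cint_closed_subset[OF n_pos] by blast
    thus ?thesis using True opn len unfolding span_le_def by simp
  next
    case False
    hence "l < n - 1" using assms(2) by simp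
    with cint_open_subset_imp_closed[OF assms(1) fstart_lt[OF assms(4)] this assms(6) len opn]
    show ?thesis using len unfolding span_le_def by simp
  qed
qed

text \<open>A point factor with nonzero coefficient must sit inside [a, a+l]: otherwise its label
  would be the only contribution at its position.\<close>
lemma comb_span_point_factor:
  assumes "a < n" "l < n" "cycle_has_span n (Sp a l) (comb z)" "k < r" "z k \<noteq> 0" "flen k = 0"
  shows "fstart k \<in> cint_closed n a l"
proof (rule ccontr)
  assume outside: "fstart k \<notin> cint_closed n a l"
  have "(\<Sum>j<r. z j * flab j (fstart k)) = z k * flab k (fstart k)"
  proof (rule sum_eq_single)
    fix j assume j: "j \<in> {..<r}" "j \<noteq> k"
    show "z j * flab j (fstart k) = 0"
    proof (rule ccontr)
      assume nz: "z j * flab j (fstart k) \<noteq> 0"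
      have "1 \<le> flen j \<Longrightarrow> ?thesis"
        using comb_span_long_factor[OF assms(1-3), of j] j nz
          point_factor_alone[OF assms(4,6), of j] outside by auto
      moreover have "flen j \<noteq> n"
        using comb_span_long_factor[OF assms(1-3), of j] j nz n_pos by auto
      ultimately show False
        using point_factor_alone[OF assms(4,6), of j] j nz flen_le[of j] by fastforce
    qed
  qed (use assms(4) in auto)
  thus False
    using assms(3,5) flab_point_nz[OF assms(4,6)] fstart_lt[OF assms(4)] outside
    unfolding comb_span_Sp by auto
qed

lemma comb_span_imp_factors_le:
  assumes "a < n" "l < n" "cycle_has_span n (Sp a l) (comb z)" "k < r" "z k \<noteq> 0"
  shows "span_le n (fspan k) (Sp a l)"
proof (cases "flen k = 0")
  case True
  hence "span_le n (Sp (fstart k) 0) (Sp a l)"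
    using comb_span_point_factor[OF assms] cint_closed_0[OF fstart_lt[OF assms(4)]] cint_open_0 assms(1,2)
    unfolding span_le_def by auto
  thus ?thesis using True n_pos unfolding fspan_eq by simp
next
  case False
  thus ?thesis using comb_span_long_factor[OF assms] unfolding fspan_eq by simp
qed

text \<open>Conversely, factors below (a, l) are active only in (a, a+l] and labelled only in
  [a, a+l].\<close>
lemma comb_span_if_factors_le:
  assumes "a < n" "l < n" "\<forall>k<r. z k \<noteq> 0 \<longrightarrow> span_le n (fspan k) (Sp a l)"
  shows "cycle_has_span n (Sp a l) (comb z)"
proof -
  have sets: "flen k < n \<and> cint_open n (fstart k) (flen k) \<subseteq> cint_open n a l \<and>
      cint_closed n (fstart k) (flen k) \<subseteq> cint_closed n a l" if "k < r" "z k \<noteq> 0" for k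
  proof -
    have le: "span_le n (fspan k) (Sp a l)" using assms(3) that by blast
    hence "flen k \<noteq> n" unfolding fspan_eq span_le_def by (auto split: if_splits)
    hence len: "flen k < n" using flen_le[OF that(1)] by simp
    hence "span_le n (Sp (fstart k) (flen k)) (Sp a l)" using le unfolding fspan_eq by simp
    thus ?thesis using span_le_sets[OF _ assms(1) fstart_lt[OF that(1)] assms(2) len] len by simp
  qed
  show ?thesis unfolding comb_span_Sp
  proof (intro conjI allI impI)
    fix i k assume "i < n" "i \<notin> cint_open n a l" "k < r" "factive k i"
    thus "z k = 0" using sets[of k] factive_iff[of k i] by auto
  next
    fix i assume i: "i < n" "i \<notin> cint_closed n a l"
    show "(\<Sum>k<r. z k * flab k i) = 0"
    proof (rule sum.neutral, intro ballI)
      fix k assume "k \<in> {..<r}"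
      thus "z k * flab k i = 0" using sets[of k] flab_support[of k i] i by fastforce
    qed
  qed
qed

lemma comb_has_span_iff:
  assumes "is_span n s" "z \<in> coord_space {..<r}"
  shows "cycle_has_span n s (comb z) \<longleftrightarrow> z \<in> coord_space {k. k < r \<and> span_le n (fspan k) s}"
proof (cases s)
  case SEmpty
  have "span_le n (fspan k) SEmpty \<longleftrightarrow> False" for k
    unfolding fspan_eq span_le_def by auto
  moreover have "comb z = (0, 0)" if "\<forall>k<r. z k = 0"
    using that unfolding comb_def by (auto simp: fun_eq_iff)
  ultimately show ?thesis
    using SEmpty assms(2) comb_eq_0_imp unfolding coord_space_def cycle_has_span_def by auto
next
  case SFull
  thus ?thesis using assms(2) unfolding cycle_has_span_def span_le_def coord_space_def by auto
next
  case (Sp a l)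
  hence al: "a < n" "l < n" using assms(1) unfolding is_span_def by auto
  have supp: "z k \<noteq> 0 \<Longrightarrow> k < r" for k using assms(2) unfolding coord_space_def by blast
  show ?thesis
  proof
    assume "cycle_has_span n s (comb z)"
    thus "z \<in> coord_space {k. k < r \<and> span_le n (fspan k) s}"
      using comb_span_imp_factors_le[OF al] supp Sp unfolding coord_space_def by blast
  next
    assume "z \<in> coord_space {k. k < r \<and> span_le n (fspan k) s}"
    thus "cycle_has_span n s (comb z)"
      using comb_span_if_factors_le[OF al] Sp unfolding coord_space_def by blast
  qed
qed



end

context factor_list begin

lemma factive_at:
  assumes "1 \<le> j" "j \<le> flen k" shows "factive k ((fstart k + j) mod n)"
  using assms factive_full factive_iff unfolding cint_open_def by blast

lemma factive_obtain:
  assumes "k < r" "factive k i" "i < n"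
  obtains j where "1 \<le> j" "j \<le> flen k" "i = (fstart k + j) mod n"
proof (cases "flen k = n")
  case full: True
  have b: "fstart k < n" using fstart_lt assms by simp
  show ?thesis
  proof (cases "cyc_off n (fstart k) i = 0")
    case True
    hence "i = (fstart k + n) mod n" using cyc_off_eq_0[OF b assms(3)] b by simp
    thus ?thesis using that full n_pos by simp
  next
    case False
    show ?thesis
    proof (rule that[of "cyc_off n (fstart k) i"])
      show "1 \<le> cyc_off n (fstart k) i" using False by simp
      show "cyc_off n (fstart k) i \<le> flen k" using full cyc_off_lt[OF n_pos, of "fstart k" i] by simp
      show "i = (fstart k + cyc_off n (fstart k) i) mod n" using add_cyc_off[OF b assms(3)] by simp
    qed
  qed
next
  case False
  hence "i \<in> cint_open n (fstart k) (flen k)" using factive_iff assms by blast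
  thus ?thesis using that unfolding cint_open_def by blast
qed

lemma factor_cycle_constant:
  assumes k: "k < r"
    and edges: "\<forall>i<n. \<exists>c. p i = c * gen_vertex k i \<and> p (nxt n i) = c * gen_vertex k (nxt n i)"
    and j: "1 \<le> j" "j \<le> flen k"
  shows "p ((fstart k + j) mod n) = p ((fstart k + 1) mod n)"
  using j
proof (induction j rule: dec_induct)
  case (step q)
  let ?q = "(fstart k + q) mod n"
  have "factive k ?q" using factive_at[of q k] step by simp
  moreover have "factive k ((fstart k + Suc q) mod n)" using factive_at[of "Suc q" k] step by simp
  hence "factive k (nxt n ?q)" by (simp only: nxt_shift)
  moreover have "?q < n" using n_pos by simp
  ultimately have "p (nxt n ?q) = p ?q" using edges unfolding gen_vertex_def by force
  moreover have "p ?q = p ((fstart k + 1) mod n)" using step.IH step.prems by simp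
  ultimately show ?case by (simp only: nxt_shift)
qed simp

lemma factor_cycle_multiple:
  assumes k: "k < r"
    and edges: "\<forall>i<n. \<exists>c. p i = c * gen_vertex k i \<and> \<beta> i = c * flab k i \<and>
                          p (nxt n i) = c * gen_vertex k (nxt n i)"
  shows "\<exists>x. \<forall>i<n. p i = x * gen_vertex k i \<and> \<beta> i = x * flab k i"
proof -
  obtain c where c: "\<And>i. i < n \<Longrightarrow> p i = c i * gen_vertex k i \<and> \<beta> i = c i * flab k i \<and>
                          p (nxt n i) = c i * gen_vertex k (nxt n i)"
    using edges by metis
  have nxt_lt: "nxt n i < n" for i using n_pos unfolding nxt_def by simp
  show ?thesis
  proof (cases "flen k = 0")
    case True
    \<comment> \<open>a point factor has no active vertices and its label lives at b_k only\<close>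
    have inactive: "\<not> factive k i" for i
      using True n_pos factive_iff[of k i] cint_open_0 by auto
    have "\<beta> i = c (fstart k) * flab k i" if "i < n" for i
    proof (cases "flab k i = 0")
      case False
      hence "i = fstart k"
        using flab_support[OF k _ that] True n_pos cint_closed_0[OF fstart_lt[OF k]] by simp
      thus ?thesis using c that by simp
    qed (use c that in simp)
    thus ?thesis using c inactive unfolding gen_vertex_def by auto
  next
    case False
    define x where "x = p ((fstart k + 1) mod n)"
    have const: "p i = x" if "i < n" "factive k i" for i
      using factive_obtain[OF k that(2,1)] factor_cycle_constant[OF k _ ] edges
      unfolding x_def by metis
    have coeff: "c i = x" if "i < n" "factive k i \<or> factive k (nxt n i)" for i
      using that c[OF that(1)] const[OF that(1)] const[OF nxt_lt] unfolding gen_vertex_def by auto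
    have "\<beta> i = x * flab k i" if i: "i < n" for i
    proof (cases "flab k i = 0 \<or> factive k i \<or> factive k (nxt n i)")
      case True thus ?thesis using coeff c i by auto
    next
      case False
      hence not_full: "flen k \<noteq> n" using factive_full by blast
      hence "i \<in> cint_closed n (fstart k) (flen k)"
        using flab_support[OF k _ i] False flen_le[OF k] by simp
      hence "i = fstart k" using cint_closed_cases[OF fstart_lt[OF k]] factive_iff[OF not_full] False by blast
      thus ?thesis using False factive_succ_start \<open>flen k \<noteq> 0\<close> unfolding nxt_def by simp
    qed
    thus ?thesis using c const unfolding gen_vertex_def by auto
  qed
qed

end

section \<open>Transporting cycles along a factorization\<close>

locale factorization = factor_list n fs
  for n and fs :: "((nat \<Rightarrow> 'a::field) \<times> nat \<times> nat) list" +
  fixes sc :: "'a \<Rightarrow> 'v::ab_group_add \<Rightarrow> 'v" and V :: "nat \<Rightarrow> 'v set"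
    and E :: "nat \<Rightarrow> ('v \<times> 'a \<times> 'v) set"
  assumes vs: "vector_space sc" and lin: "linear_trellis sc n V E"
    and equiv: "trellis_equiv n V E (prodV (map (\<lambda>(al, a, l). elemV n a l) fs))
                  (prodE (map (\<lambda>(al, a, l). elemE n al a l) fs))"
begin

definition PV :: "nat \<Rightarrow> 'a list set" where "PV = prodV (map (\<lambda>(al, a, l). elemV n a l) fs)"
definition PE :: "nat \<Rightarrow> ('a list \<times> 'a \<times> 'a list) set" where
  "PE = prodE (map (\<lambda>(al, a, l). elemE n al a l) fs)"

lemma PV_mem: "xs \<in> PV i \<longleftrightarrow> length xs = r \<and> (\<forall>k<r. factive k i \<or> xs ! k = 0)"
  unfolding PV_def prodV_def using nth_factor by (auto simp: elemV_def factive_def)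

lemma PE_mem: "(xs, \<beta>, ys) \<in> PE i \<longleftrightarrow> (\<exists>bs. length xs = r \<and> length bs = r \<and> length ys = r \<and>
    \<beta> = sum_list bs \<and> (\<forall>k<r. \<exists>c. xs ! k = c * gen_vertex k i \<and> bs ! k = c * flab k i \<and>
                                  ys ! k = c * gen_vertex k (nxt n i)))"
proof -
  have "(p, b, q) \<in> elemE n (flab k) (fstart k) (flen k) i \<longleftrightarrow>
      (\<exists>c. p = c * gen_vertex k i \<and> b = c * flab k i \<and> q = c * gen_vertex k (nxt n i))" for p b q k
    unfolding elemE_def gen_vertex_def factive_def Let_def by auto
  moreover have "(case fs ! k of (al, a, l) \<Rightarrow> elemE n al a l) = elemE n (flab k) (fstart k) (flen k)" for k
    using nth_factor[of k] by simp
  ultimately show ?thesis unfolding PE_def prodE_def by simp blast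
qed

definition is_iso :: "(nat \<Rightarrow> 'v \<Rightarrow> 'a list) \<Rightarrow> bool" where
  "is_iso f \<longleftrightarrow> (\<forall>i<n. bij_betw (f i) (V i) (PV i)) \<and>
     (\<forall>i<n. \<forall>x\<in>V i. \<forall>y\<in>V (nxt n i). \<forall>a. (x, a, y) \<in> E i \<longleftrightarrow> (f i x, a, f (nxt n i) y) \<in> PE i)"

definition iso :: "nat \<Rightarrow> 'v \<Rightarrow> 'a list" where "iso = (SOME f. is_iso f)"

lemma iso: "is_iso iso"
proof -
  obtain f where "is_iso f" using equiv unfolding trellis_equiv_def is_iso_def PV_def PE_def by blast
  thus ?thesis unfolding iso_def by (rule someI[where P = is_iso])
qed

lemma iso_bij: "i < n \<Longrightarrow> bij_betw (iso i) (V i) (PV i)"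
  using iso unfolding is_iso_def by blast

lemma iso_edge: "i < n \<Longrightarrow> x \<in> V i \<Longrightarrow> y \<in> V (nxt n i) \<Longrightarrow>
    (x, a, y) \<in> E i \<longleftrightarrow> (iso i x, a, iso (nxt n i) y) \<in> PE i"
  using iso unfolding is_iso_def by blast

definition iso_inv :: "nat \<Rightarrow> 'a list \<Rightarrow> 'v" where "iso_inv i = inv_into (V i) (iso i)"

lemma iso_inv:
  assumes "i < n" "xs \<in> PV i" shows "iso_inv i xs \<in> V i" "iso i (iso_inv i xs) = xs"
  using iso_bij[OF assms(1)] assms(2) unfolding iso_inv_def
  by (auto simp: bij_betw_def f_inv_into_f inv_into_into)

lemma iso_inv_iso: "i < n \<Longrightarrow> v \<in> V i \<Longrightarrow> iso_inv i (iso i v) = v"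
  using iso_bij unfolding iso_inv_def by (simp add: bij_betw_def inv_into_f_f)

lemma edges_in_V: "i < n \<Longrightarrow> (x, a, y) \<in> E i \<Longrightarrow> x \<in> V i \<and> y \<in> V (nxt n i)"
  using lin unfolding linear_trellis_def is_trellis_def by blast

definition coord_vertex :: "(nat \<Rightarrow> 'a) \<Rightarrow> nat \<Rightarrow> 'a list" where
  "coord_vertex z i = map (\<lambda>k. z k * gen_vertex k i) [0..<r]"

definition Phi :: "(nat \<Rightarrow> 'a) \<Rightarrow> (nat \<Rightarrow> 'v) \<times> (nat \<Rightarrow> 'a)" where
  "Phi z = ((\<lambda>i. if i < n then iso_inv i (coord_vertex z i) else 0), snd (comb z))"

lemma coord_vertex_in: "coord_vertex z i \<in> PV i"
  unfolding PV_mem coord_vertex_def gen_vertex_def by auto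

lemma Phi_cycle: "Phi z \<in> cycles n V E"
proof -
  have "(iso_inv i (coord_vertex z i), snd (comb z) i, iso_inv (nxt n i) (coord_vertex z (nxt n i))) \<in> E i"
    if i: "i < n" for i
  proof -
    have ni: "nxt n i < n" using n_pos unfolding nxt_def by simp
    have "sum_list (map (\<lambda>k. z k * flab k i) [0..<r]) = snd (comb z) i"
      using comb_label[OF i] by (simp add: sum_list_sum_nth atLeast0LessThan)
    hence "(coord_vertex z i, snd (comb z) i, coord_vertex z (nxt n i)) \<in> PE i"
      unfolding PE_mem coord_vertex_def by (intro exI[of _ "map (\<lambda>k. z k * flab k i) [0..<r]"]) auto
    thus ?thesis
      using iso_edge[OF i iso_inv(1)[OF i coord_vertex_in] iso_inv(1)[OF ni coord_vertex_in]]
        iso_inv(2)[OF i coord_vertex_in] iso_inv(2)[OF ni coord_vertex_in] by simp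
  qed
  moreover have "i \<ge> n \<Longrightarrow> snd (comb z) i = 0" for i unfolding comb_def by simp
  ultimately show ?thesis unfolding cycles_def Phi_def using n_pos unfolding nxt_def by auto
qed

text \<open>Phi need not be linear, but Phi x - Phi y vanishes exactly where comb (x - y) does.\<close>
lemma Phi_diff_has_span:
  "cycle_has_span n s (Phi x - Phi y) \<longleftrightarrow> cycle_has_span n s (comb (x - y))"
proof (rule cycle_has_span_cong)
  fix i
  have "fst (Phi x - Phi y) i = 0 \<longleftrightarrow> fst (comb (x - y)) i = 0"
  proof (cases "i < n")
    case True
    have "fst (Phi x - Phi y) i = iso_inv i (coord_vertex x i) - iso_inv i (coord_vertex y i)"
      unfolding Phi_def using True by simp
    hence "fst (Phi x - Phi y) i = 0 \<longleftrightarrow> coord_vertex x i = coord_vertex y i"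
      using iso_inv(2)[OF True coord_vertex_in, of x] iso_inv(2)[OF True coord_vertex_in, of y]
      by (metis right_minus_eq)
    also have "\<dots> \<longleftrightarrow> (\<forall>k<r. factive k i \<longrightarrow> x k = y k)"
      unfolding coord_vertex_def map_eq_conv gen_vertex_def by auto
    finally show ?thesis using comb_vertex_eq_0[OF True] by simp
  qed (simp add: Phi_def comb_def)
  moreover have "snd (Phi x - Phi y) = snd (comb (x - y))"
    using comb_label_diff unfolding Phi_def by simp
  ultimately show "(fst (Phi x - Phi y) i = 0 \<longleftrightarrow> fst (comb (x - y)) i = 0) \<and>
      (snd (Phi x - Phi y) i = 0 \<longleftrightarrow> snd (comb (x - y)) i = 0)" by simp
qed

end

context factorization begin

interpretation C: vector_space "cyc_scale sc" by (rule cycle_space_vector_space[OF vs])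

text \<open>Every cycle of T comes from a combination of generating cycles: transported to the product,
  its k-th coordinates form a cycle of the k-th elementary factor, hence a multiple of the
  generating cycle.\<close>
lemma Phi_surj:
  assumes "c \<in> cycles n V E" shows "\<exists>x \<in> coord_space {..<r}. Phi x = c"
proof -
  obtain v al where c: "c = (v, al)" by (cases c)
  have edge: "\<And>i. i < n \<Longrightarrow> (v i, al i, v (nxt n i)) \<in> E i"
    and outside: "\<And>i. n \<le> i \<Longrightarrow> v i = 0 \<and> al i = 0"
    using assms c unfolding cycles_def by auto
  define w where "w i = iso i (v i)" for i
  define split where "split i bs \<longleftrightarrow> length (w i) = r \<and> length bs = r \<and> al i = sum_list bs \<and>
      (\<forall>k<r. \<exists>c. w i ! k = c * gen_vertex k i \<and> bs ! k = c * flab k i \<and>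
                   w (nxt n i) ! k = c * gen_vertex k (nxt n i))" for i bs
  have "\<exists>bs. i < n \<longrightarrow> split i bs" for i
  proof (cases "i < n")
    case True
    have "(w i, al i, w (nxt n i)) \<in> PE i"
      using iso_edge[OF True, of "v i" "v (nxt n i)" "al i"] edge[OF True] edges_in_V[OF True edge[OF True]]
      unfolding w_def by simp
    thus ?thesis unfolding PE_mem split_def by blast
  qed simp
  then obtain bs where bs: "\<And>i. i < n \<Longrightarrow> split i (bs i)" using choice by metis
  have "\<exists>x. k < r \<longrightarrow> (\<forall>i<n. w i ! k = x * gen_vertex k i \<and> bs i ! k = x * flab k i)" for k
  proof (cases "k < r")
    case True
    show ?thesis
      using factor_cycle_multiple[OF True, of "\<lambda>i. w i ! k" "\<lambda>i. bs i ! k"] bs True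
      unfolding split_def by blast
  qed simp
  then obtain xs where xs: "\<And>k i. k < r \<Longrightarrow> i < n \<Longrightarrow> w i ! k = xs k * gen_vertex k i \<and> bs i ! k = xs k * flab k i"
    using choice by metis
  define x where "x k = (if k < r then xs k else 0)" for k
  have vertices: "coord_vertex x i = w i" if i: "i < n" for i
  proof (rule nth_equalityI)
    show "length (coord_vertex x i) = length (w i)" using bs[OF i] unfolding coord_vertex_def split_def by simp
    fix k assume "k < length (coord_vertex x i)"
    thus "coord_vertex x i ! k = w i ! k" using xs[OF _ i] unfolding coord_vertex_def x_def by simp
  qed
  have "fst (Phi x) i = v i" for i
  proof (cases "i < n")
    case True thus ?thesis
      using vertices[OF True] iso_inv_iso[OF True] edges_in_V[OF True edge[OF True]] unfolding Phi_def w_def by simp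
  qed (simp add: Phi_def outside)
  moreover have "snd (Phi x) i = al i" for i
  proof (cases "i < n")
    case True
    have "al i = (\<Sum>k<r. bs i ! k)" using bs[OF True] unfolding split_def by (simp add: sum_list_sum_nth atLeast0LessThan)
    thus ?thesis using True xs[OF _ True] comb_label[OF True] unfolding Phi_def x_def by simp
  qed (simp add: Phi_def comb_def outside)
  moreover have "x \<in> coord_space {..<r}" unfolding coord_space_def x_def by simp
  ultimately show ?thesis using c by (auto simp: prod_eq_iff fun_eq_iff)
qed

lemma Phi_diff_in_cycles_span:
  assumes "is_span n s" "x \<in> coord_space {..<r}" "y \<in> coord_space {..<r}"
  shows "Phi x - Phi y \<in> cycles_span n V E s \<longleftrightarrow> x - y \<in> coord_space {k. k < r \<and> span_le n (fspan k) s}"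
proof -
  have "Phi x - Phi y \<in> cycles n V E"
    using C.subspace_diff[OF cycles_subspace[OF vs lin] Phi_cycle Phi_cycle] .
  hence "Phi x - Phi y \<in> cycles_span n V E s \<longleftrightarrow> cycle_has_span n s (Phi x - Phi y)"
    unfolding cycles_span_def by blast
  also have "\<dots> \<longleftrightarrow> cycle_has_span n s (comb (x - y))" by (rule Phi_diff_has_span)
  also have "\<dots> \<longleftrightarrow> x - y \<in> coord_space {k. k < r \<and> span_le n (fspan k) s}"
    by (rule comb_has_span_iff[OF assms(1) coord_space_diff[OF assms(2,3)]])
  finally show ?thesis .
qed

lemma Phi_inj:
  assumes "x \<in> coord_space {..<r}" "y \<in> coord_space {..<r}" "Phi x = Phi y" shows "x = y"
proof
  have zero: "cycle_has_span n SEmpty (comb (x - y))"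
    using assms(3) Phi_diff_has_span[of SEmpty x y] by (simp add: cycle_has_span_def zero_prod_def)
  fix k show "x k = y k"
  proof (cases "k < r")
    case True thus ?thesis using comb_eq_0_imp[OF zero True] by simp
  next
    case False
    have "x k = 0" "y k = 0" using assms(1,2) False unfolding coord_space_def by blast+
    thus ?thesis by simp
  qed
qed

end

section \<open>Dimension counts\<close>

context factorization begin

interpretation C: vector_space "cyc_scale sc" by (rule cycle_space_vector_space[OF vs])

lemma cycles_eq_image: "cycles n V E = Phi ` coord_space {..<r}"
  using Phi_surj Phi_cycle by blast

lemma span_cycles_spans_subset: "C.span (\<Union> (cycles_span n V E ` J)) \<subseteq> cycles n V E"
  by (rule C.span_minimal[OF _ cycles_subspace[OF vs lin]]) (auto simp: cycles_span_def)

definition factors_below :: "span set \<Rightarrow> nat set" where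
  "factors_below J = {k. k < r \<and> (\<exists>s\<in>J. span_le n (fspan k) s)}"

text \<open>Fix a coefficient vector x0 with Phi x0 = 0.  Moving inside the span of the S_s(T), s \<in> J,
  changes the coefficients only at factors below J \<dots>\<close>
lemma span_cycles_spans_coeffs:
  assumes J: "\<forall>s\<in>J. is_span n s" and x0: "x0 \<in> coord_space {..<r}" "Phi x0 = 0"
    and w: "w \<in> C.span (\<Union> (cycles_span n V E ` J))" "x \<in> coord_space {..<r}" "Phi x = w"
  shows "x - x0 \<in> coord_space (factors_below J)"
  using w
proof (induction w arbitrary: x rule: C.span_induct_alt)
  case base
  hence "x = x0" using Phi_inj x0 by metis
  thus ?case unfolding coord_space_def by simp
next
  case (step c t y)
  then obtain s where s: "s \<in> J" "t \<in> cycles_span n V E s" by blast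
  have t: "t \<in> cycles n V E" using s unfolding cycles_span_def by simp
  have "y = Phi x - cyc_scale sc c t" using step.prems(2) by (simp add: eq_diff_eq add.commute)
  hence "y \<in> cycles n V E"
    using C.subspace_diff[OF cycles_subspace[OF vs lin] Phi_cycle C.subspace_scale[OF cycles_subspace[OF vs lin] t]]
    by simp
  then obtain x' where x': "x' \<in> coord_space {..<r}" "Phi x' = y" using Phi_surj by blast
  have "Phi x - Phi x' = cyc_scale sc c t" using step.prems(2) x'(2) by simp
  hence "Phi x - Phi x' \<in> cycles_span n V E s"
    using C.subspace_scale[OF cycles_span_subspace[OF vs lin] s(2)] by simp
  hence "x - x' \<in> coord_space {k. k < r \<and> span_le n (fspan k) s}"
    using Phi_diff_in_cycles_span J s(1) step.prems(1) x'(1) by blast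
  hence "x - x' \<in> coord_space (factors_below J)"
    by (rule coord_space_mono) (use s(1) in \<open>auto simp: factors_below_def\<close>)
  moreover have "x' - x0 \<in> coord_space (factors_below J)" using step.IH x' by blast
  moreover have "x - x0 = (x - x') + (x' - x0)" by simp
  ultimately show ?case using coord_space_add by metis
qed

text \<open>\<dots> and every such change of coefficients is realised inside that span: change them one
  coordinate at a time.\<close>
lemma coeffs_in_span_cycles_spans:
  assumes J: "\<forall>s\<in>J. is_span n s" and x0: "x0 \<in> coord_space {..<r}" "Phi x0 = 0"
    and x: "x \<in> coord_space {..<r}" "x - x0 \<in> coord_space (factors_below J)"
  shows "Phi x \<in> C.span (\<Union> (cycles_span n V E ` J))"
proof -
  define y where "y j = (\<lambda>k. if k < j then x k else x0 k)" for j
  have y_coeffs: "y j \<in> coord_space {..<r}" for j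
    using x(1) x0(1) unfolding coord_space_def y_def by auto
  have "Phi (y j) \<in> C.span (\<Union> (cycles_span n V E ` J))" for j
  proof (induction j)
    case 0
    have "y 0 = x0" unfolding y_def by simp
    thus ?case using x0(2) C.span_zero by simp
  next
    case (Suc j)
    show ?case
    proof (cases "x j = x0 j")
      case True
      hence "y (Suc j) = y j" unfolding y_def by (auto simp: fun_eq_iff less_Suc_eq)
      thus ?thesis using Suc.IH by simp
    next
      case False
      then obtain s where s: "s \<in> J" "span_le n (fspan j) s" and j: "j < r"
        using x(2) unfolding coord_space_def factors_below_def by force
      have "y (Suc j) - y j \<in> coord_space {k. k < r \<and> span_le n (fspan k) s}"
        using j s(2) unfolding coord_space_def y_def by (auto simp: less_Suc_eq)
      hence "Phi (y (Suc j)) - Phi (y j) \<in> cycles_span n V E s"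
        using Phi_diff_in_cycles_span J s(1) y_coeffs by blast
      hence "Phi (y (Suc j)) - Phi (y j) \<in> C.span (\<Union> (cycles_span n V E ` J))"
        using s(1) by (intro C.span_base) blast
      from C.span_add[OF this Suc.IH] show ?thesis by simp
    qed
  qed
  moreover have "y r = x"
  proof
    fix k show "y r k = x k"
    proof (cases "k < r")
      case False
      hence "x k = 0" "x0 k = 0" using x(1) x0(1) unfolding coord_space_def by blast+
      thus ?thesis unfolding y_def by simp
    qed (simp add: y_def)
  qed
  ultimately show ?thesis by metis
qed

lemma span_cycles_spans_eq_image:
  assumes J: "\<forall>s\<in>J. is_span n s" and x0: "x0 \<in> coord_space {..<r}" "Phi x0 = 0"
  shows "C.span (\<Union> (cycles_span n V E ` J)) = Phi ` ((\<lambda>z. z + x0) ` coord_space (factors_below J))"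
    (is "?W = Phi ` ((\<lambda>z. z + x0) ` ?K)")
proof
  show "?W \<subseteq> Phi ` ((\<lambda>z. z + x0) ` ?K)"
  proof
    fix w assume w: "w \<in> ?W"
    hence "w \<in> Phi ` coord_space {..<r}" using span_cycles_spans_subset unfolding cycles_eq_image by blast
    then obtain x where x: "x \<in> coord_space {..<r}" "Phi x = w" by blast
    have "x - x0 \<in> ?K" using span_cycles_spans_coeffs[OF J x0 w x] .
    moreover have "x = (x - x0) + x0" by simp
    ultimately show "w \<in> Phi ` ((\<lambda>z. z + x0) ` ?K)" using x(2) by blast
  qed
  show "Phi ` ((\<lambda>z. z + x0) ` ?K) \<subseteq> ?W"
  proof
    fix w assume "w \<in> Phi ` ((\<lambda>z. z + x0) ` ?K)"
    then obtain z where z: "z \<in> ?K" "w = Phi (z + x0)" by blast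
    have "factors_below J \<subseteq> {..<r}" unfolding factors_below_def by blast
    hence "z + x0 \<in> coord_space {..<r}" using coord_space_add[OF coord_space_mono[OF z(1)] x0(1)] by simp
    moreover have "z + x0 - x0 \<in> ?K" using z by simp
    ultimately show "w \<in> ?W" using coeffs_in_span_cycles_spans[OF J x0] z(2) by blast
  qed
qed

lemma dim_span_cycles_spans:
  assumes "finite (UNIV :: 'a set)" "\<forall>s\<in>J. is_span n s"
  shows "cdim sc (C.span (\<Union> (cycles_span n V E ` J))) = card (factors_below J)"
proof -
  let ?W = "C.span (\<Union> (cycles_span n V E ` J))"
  let ?K = "coord_space (factors_below J) :: (nat \<Rightarrow> 'a) set"
  obtain x0 where x0: "x0 \<in> coord_space {..<r}" "Phi x0 = 0"
    using Phi_surj[OF C.subspace_0[OF cycles_subspace[OF vs lin]]] by blast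
  have below_r: "factors_below J \<subseteq> {..<r}" unfolding factors_below_def by blast
  have "inj_on Phi (coord_space {..<r})" by (rule inj_onI) (rule Phi_inj)
  moreover have "(\<lambda>z. z + x0) ` ?K \<subseteq> coord_space {..<r}"
    using coord_space_add[OF coord_space_mono[OF _ below_r] x0(1)] by blast
  ultimately have "inj_on Phi ((\<lambda>z. z + x0) ` ?K)" by (rule inj_on_subset)
  moreover have "inj_on (\<lambda>z. z + x0) ?K" by (rule inj_onI) simp
  ultimately have "card ?W = card ?K"
    unfolding span_cycles_spans_eq_image[OF assms(2) x0] by (simp add: card_image)
  also have "\<dots> = card (UNIV :: 'a set) ^ card (factors_below J)"
    by (rule card_coord_space) (use below_r finite_subset in blast)
  finally have card: "card ?W = card (UNIV :: 'a set) ^ card (factors_below J)" .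
  have "finite (cycles n V E)"
    unfolding cycles_eq_image by (rule finite_imageI, rule finite_coord_space[OF _ assms(1)]) simp
  hence "finite ?W" using span_cycles_spans_subset finite_subset by blast
  thus ?thesis unfolding cdim_def using C.dim_eq_if_card[OF assms(1) _ _ card] by simp
qed

lemma cdim_cycles_span:
  assumes "finite (UNIV :: 'a set)" "is_span n s"
  shows "cdim sc (cycles_span n V E s) = card {k. k < r \<and> span_le n (fspan k) s}"
proof -
  have span_eq: "C.span (\<Union> (cycles_span n V E ` {s})) = cycles_span n V E s"
    using C.span_eq_iff[of "cycles_span n V E s"] cycles_span_subspace[OF vs lin] by simp
  have "cdim sc (cycles_span n V E s) = card (factors_below {s})"
    using dim_span_cycles_spans[OF assms(1), of "{s}"] assms(2) unfolding span_eq by simp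
  thus ?thesis unfolding factors_below_def by simp
qed

lemma cdim_cycles_below:
  assumes "finite (UNIV :: 'a set)" "is_span n s"
  shows "cdim sc (cycles_below sc n V E s) = card {k. k < r \<and> span_le n (fspan k) s \<and> fspan k \<noteq> s}"
proof -
  let ?J = "{s'. is_span n s' \<and> span_le n s' s \<and> s' \<noteq> s}"
  have "{cycles_span n V E s' |s'. is_span n s' \<and> span_le n s' s \<and> s' \<noteq> s} = cycles_span n V E ` ?J"
    by blast
  hence "cycles_below sc n V E s = C.span (\<Union> (cycles_span n V E ` ?J))"
    unfolding cycles_below_def by simp
  moreover have "factors_below ?J = {k. k < r \<and> span_le n (fspan k) s \<and> fspan k \<noteq> s}"
    unfolding factors_below_def using exists_below_iff[OF fspan_is_span assms(2)] by blast
  ultimately show ?thesis using dim_span_cycles_spans[OF assms(1), of ?J] by simp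
qed


lemma count_span_eq:
  assumes "finite (UNIV :: 'a set)" "is_span n s"
  shows "count_span n fs s = cdim sc (cycles_span n V E s) - cdim sc (cycles_below sc n V E s)"
proof -
  let ?le = "{k. k < r \<and> span_le n (fspan k) s}"
  let ?lt = "{k. k < r \<and> span_le n (fspan k) s \<and> fspan k \<noteq> s}"
  let ?eq = "{k. k < r \<and> fspan k = s}"
  have "?le = ?lt \<union> ?eq"
  proof (rule set_eqI)
    fix k show "k \<in> ?le \<longleftrightarrow> k \<in> ?lt \<union> ?eq" using span_le_refl[OF fspan_is_span[of k]] by auto
  qed
  moreover have "?lt \<inter> ?eq = {}" by blast
  ultimately have "card ?le = card ?lt + card ?eq" by (simp add: card_Un_disjoint)
  moreover have "count_span n fs s = card ?eq"
    unfolding count_span_def length_filter_conv_card fspan_def ..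
  ultimately show ?thesis
    unfolding cdim_cycles_span[OF assms] cdim_cycles_below[OF assms] by simp
qed

lemma count_span_not_span:
  assumes "\<not> is_span n s" shows "count_span n fs s = 0"
proof -
  have "factor_span n f \<noteq> s" if "f \<in> set fs" for f
  proof -
    from that obtain k where "k < r" "fs ! k = f" by (auto simp: in_set_conv_nth)
    thus ?thesis using fspan_is_span assms unfolding fspan_def by auto
  qed
  hence "\<forall>f\<in>set fs. factor_span n f \<noteq> s" by blast
  thus ?thesis unfolding count_span_def by (simp add: filter_empty_conv)
qed

end

lemma factorization_if_elem_factorization:
  fixes sc :: "'a::field \<Rightarrow> 'v::ab_group_add \<Rightarrow> 'v"
  assumes "1 \<le> n" "vector_space sc" "linear_trellis sc n V E" "elem_factorization n V E fs"
  shows "factorization n fs sc V E"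
proof -
  note fact = assms(4)[unfolded elem_factorization_def]
  show ?thesis
  proof (rule factorization.intro)
    show "factor_list n fs"
      by (rule factor_list.intro[OF assms(1) fact[THEN conjunct1] fact[THEN conjunct2, THEN conjunct1]
            fact[THEN conjunct2, THEN conjunct2, THEN conjunct1]])
    show "factorization_axioms n fs sc V E"
      by (rule factorization_axioms.intro[OF assms(2,3) fact[THEN conjunct2, THEN conjunct2, THEN conjunct2]])
  qed
qed

lemma count_mset_map: "count (mset (map g xs)) s = length (filter (\<lambda>x. g x = s) xs)"
  by (induction xs) auto

theorem mainTheorem8:
  fixes sc :: "'a::{finite, field} \<Rightarrow> 'v::ab_group_add \<Rightarrow> 'v"
    and n :: nat
    and V :: "nat \<Rightarrow> 'v set"
    and E :: "nat \<Rightarrow> ('v \<times> 'a \<times> 'v) set"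
    and fs fs' :: "((nat \<Rightarrow> 'a) \<times> nat \<times> nat) list"
  assumes "1 \<le> n"
    and "vector_space sc"
    and "linear_trellis sc n V E"
    and "trim n V E"
    and "reduced n V E"
    and "elem_factorization n V E fs"
    and "elem_factorization n V E fs'"
  shows "mset (map (factor_span n) fs) = mset (map (factor_span n) fs')
       \<and> (\<forall>s. is_span n s \<longrightarrow>
            count_span n fs s = cdim sc (cycles_span n V E s) - cdim sc (cycles_below sc n V E s))"
proof -
  have F: "factorization n fs sc V E" and F': "factorization n fs' sc V E"
    using factorization_if_elem_factorization assms(1-3,6,7) by blast+
  have fin: "finite (UNIV :: 'a set)" by simp
  have same_count: "count_span n fs s = count_span n fs' s" for s
  proof (cases "is_span n s")
    case True
    show ?thesis using factorization.count_span_eq[OF F fin True] factorization.count_span_eq[OF F' fin True]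
      by simp
  next
    case False
    show ?thesis using factorization.count_span_not_span[OF F False] factorization.count_span_not_span[OF F' False]
      by simp
  qed
  have "mset (map (factor_span n) fs) = mset (map (factor_span n) fs')"
  proof (rule multiset_eqI)
    fix s show "count (mset (map (factor_span n) fs)) s = count (mset (map (factor_span n) fs')) s"
      unfolding count_mset_map using same_count[of s] unfolding count_span_def .
  qed
  moreover have "\<forall>s. is_span n s \<longrightarrow>
      count_span n fs s = cdim sc (cycles_span n V E s) - cdim sc (cycles_below sc n V E s)"
    using factorization.count_span_eq[OF F fin] by blast
  ultimately show ?thesis ..
qed

end
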